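(* Let $n\geqslant 2$ be an integer. Then $(\mathbf{1})\alpha=\mathbf{1}$ for every isometry $\alpha$ of $\mathbb{N}^n$ onto itself, where $\mathbf{1}=(1,\ldots,1)$.
   Context: $\mathbb{N}=\{1,2,3,\ldots\}$ and $\mathbb{N}^n$ carries the Euclidean metric $d((x_1,\ldots,x_n),(y_1,\ldots,y_n))=\sqrt{\sum_{i=1}^n(x_i-y_i)^2}$. An isometry of $\mathbb{N}^n$ is a distance-preserving bijection $\mathbb{N}^n\to\mathbb{N}^n$; maps are written on the right of their arguments. *)

theory Defs
  imports "HOL-Analysis.Analysis"
begin

text \<open>Points of N^n (N = {1,2,3,...}) are represented as lists of natural numbers
of length n with all entries at least 1.\<close>

definition NN :: "nat \<Rightarrow> nat list set" where
  "NN n = {xs. length xs = n \<and> (\<forall>x\<in>set xs. 1 \<le> x)}"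

definition edist :: "nat list \<Rightarrow> nat list \<Rightarrow> real" where
  "edist xs ys = sqrt (\<Sum>i<length xs. (real (xs ! i) - real (ys ! i))\<^sup>2)"

definition isometry_NN :: "nat \<Rightarrow> (nat list \<Rightarrow> nat list) \<Rightarrow> bool" where
  "isometry_NN n f \<longleftrightarrow> bij_betw f (NN n) (NN n) \<and>
     (\<forall>x\<in>NN n. \<forall>y\<in>NN n. edist (f x) (f y) = edist x y)"

end

theory Submission
  imports Defs
begin

text \<open>An isometry maps the unit sphere around a point onto the unit sphere around its image.
The sphere around \<open>\<one> = (1,\<dots>,1)\<close> consists of the \<open>n\<close> points \<open>\<one> + e\<^sub>j\<close>, whereas any other point
\<open>y\<close> has the \<open>n + 1\<close> distinct neighbours \<open>y + e\<^sub>j\<close> and \<open>y - e\<^sub>i\<close> for a coordinate \<open>y\<^sub>i \<ge> 2\<close>.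
Hence \<open>\<one>\<close> is the only point with so small a unit sphere, and it is fixed.
The argument works for every \<open>n\<close>.\<close>

definition unit_sphere_NN :: "nat \<Rightarrow> nat list \<Rightarrow> nat list set" where
  "unit_sphere_NN n x = {y \<in> NN n. edist x y = 1}"

lemma NN_length: "x \<in> NN n \<Longrightarrow> length x = n"
  by (simp add: NN_def)

lemma NN_nth_ge_1: "x \<in> NN n \<Longrightarrow> k < n \<Longrightarrow> 1 \<le> x ! k"
  by (auto simp: NN_def)

lemma list_update_in_NN:
  assumes "x \<in> NN n" "1 \<le> v"
  shows "x[j := v] \<in> NN n"
  using assms set_update_subset_insert[of x j v] by (auto simp: NN_def)

lemma replicate_1_in_NN: "replicate n 1 \<in> NN n"
  by (simp add: NN_def)

lemma edist_list_update:
  assumes "j < length y"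
  shows "edist y (y[j := v]) = \<bar>real (y ! j) - real v\<bar>"
proof -
  have "(\<Sum>k<length y. (real (y ! k) - real (y[j := v] ! k))\<^sup>2)
      = (\<Sum>k<length y. if k = j then (real (y ! j) - real v)\<^sup>2 else 0)"
    by (rule sum.cong) (auto simp: nth_list_update)
  also have "\<dots> = (real (y ! j) - real v)\<^sup>2"
    using assms by simp
  finally show ?thesis
    by (simp add: edist_def)
qed

lemma sum_squares_eq_1_nat:
  fixes f :: "nat \<Rightarrow> nat"
  assumes "(\<Sum>k<n. (f k)\<^sup>2) = 1"
  shows "\<exists>j<n. f j = 1 \<and> (\<forall>k<n. k \<noteq> j \<longrightarrow> f k = 0)"
  using assms
proof (induction n)
  case 0
  then show ?case by simp
next
  case (Suc n)
  show ?case
  proof (cases "f n = 0")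
    case True
    with Suc.prems obtain j where "j < n" "f j = 1" "\<forall>k<n. k \<noteq> j \<longrightarrow> f k = 0"
      using Suc.IH by auto
    with True show ?thesis
      by (metis less_Suc_eq)
  next
    case False
    then have "1 \<le> (f n)\<^sup>2"
      by simp
    with Suc.prems have "(f n)\<^sup>2 = 1" and "(\<Sum>k<n. (f k)\<^sup>2) = 0"
      by (simp_all only: sum.lessThan_Suc)
    then have "f n = 1" and "\<forall>k<n. f k = 0"
      by simp_all
    then show ?thesis
      by (metis lessI less_SucE)
  qed
qed

lemma unit_sphere_replicate_1:
  "unit_sphere_NN n (replicate n 1) \<subseteq> (\<lambda>j. (replicate n 1)[j := 2]) ` {..<n}"
proof
  fix x
  assume "x \<in> unit_sphere_NN n (replicate n 1)"
  then have x: "x \<in> NN n" and "edist (replicate n 1) x = 1"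
    by (auto simp: unit_sphere_NN_def)
  have ge: "\<And>k. k < n \<Longrightarrow> 1 \<le> x ! k"
    using x by (rule NN_nth_ge_1)
  have "(\<Sum>k<n. (1 - real (x ! k))\<^sup>2) = 1"
    using \<open>edist (replicate n 1) x = 1\<close> by (simp add: edist_def)
  moreover have "(1 - real (x ! k))\<^sup>2 = real ((x ! k - 1)\<^sup>2)" if "k < n" for k
    using ge[OF that] by (simp add: of_nat_diff power2_commute)
  ultimately have "real (\<Sum>k<n. (x ! k - 1)\<^sup>2) = 1"
    by simp
  then obtain j where j: "j < n" "x ! j - 1 = 1" and others: "\<forall>k<n. k \<noteq> j \<longrightarrow> x ! k - 1 = 0"
    using sum_squares_eq_1_nat[of "\<lambda>k. x ! k - 1" n] by (metis of_nat_eq_1_iff)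
  have "x = (replicate n 1)[j := 2]"
  proof (rule nth_equalityI)
    show "length x = length ((replicate n 1)[j := 2])"
      using x by (simp add: NN_length)
    fix k
    assume "k < length x"
    then show "x ! k = (replicate n 1)[j := 2] ! k"
      using j others ge[of k] x by (cases "k = j") (auto simp: NN_length)
  qed
  with j show "x \<in> (\<lambda>j. (replicate n 1)[j := 2]) ` {..<n}"
    by blast
qed

lemma card_unit_sphere_replicate_1: "card (unit_sphere_NN n (replicate n 1)) \<le> n"
proof -
  have "card (unit_sphere_NN n (replicate n 1)) \<le> card ((\<lambda>j. (replicate n 1)[j := 2::nat]) ` {..<n})"
    by (rule card_mono[OF _ unit_sphere_replicate_1]) simp
  also have "\<dots> \<le> n"
    using card_image_le[of "{..<n}"] by simp
  finally show ?thesis .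
qed

lemma card_unit_sphere_gt:
  assumes y: "y \<in> NN n" and "y \<noteq> replicate n 1"
    and fin: "finite (unit_sphere_NN n y)"
  shows "n < card (unit_sphere_NN n y)"
proof -
  have ly: "length y = n"
    using y by (rule NN_length)
  obtain i where i: "i < n" "2 \<le> y ! i"
  proof -
    have "\<exists>i<n. y ! i \<noteq> 1"
      using \<open>y \<noteq> replicate n 1\<close> ly by (metis length_replicate nth_equalityI nth_replicate)
    with that show ?thesis
      using NN_nth_ge_1[OF y] by (metis One_nat_def Suc_1 Suc_leI le_neq_implies_less)
  qed
  define up where "up = (\<lambda>j. y[j := y ! j + 1])"
  define down where "down = y[i := y ! i - 1]"
  have inj_up: "inj_on up {..<n}"
  proof (rule inj_onI)
    fix a b
    assume "a \<in> {..<n}" "b \<in> {..<n}" "up a = up b"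
    then have "up a ! a = up b ! a"
      by simp
    with \<open>a \<in> {..<n}\<close> show "a = b"
      using ly by (cases "a = b") (auto simp: up_def)
  qed
  have down_not_up: "down \<notin> up ` {..<n}"
  proof
    assume "down \<in> up ` {..<n}"
    then obtain j where "j < n" "down = up j"
      by auto
    then have "y ! i \<le> down ! i"
      using ly i by (auto simp: up_def nth_list_update)
    with i ly show False
      by (simp add: down_def)
  qed
  have "insert down (up ` {..<n}) \<subseteq> unit_sphere_NN n y"
  proof -
    have "down \<in> unit_sphere_NN n y"
      using i ly y edist_list_update[of i y "y ! i - 1"]
      by (simp add: unit_sphere_NN_def down_def list_update_in_NN of_nat_diff)
    moreover have "up j \<in> unit_sphere_NN n y" if "j < n" for j
      using that ly y edist_list_update[of j y "y ! j + 1"]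
      by (simp add: unit_sphere_NN_def up_def list_update_in_NN)
    ultimately show ?thesis
      by blast
  qed
  then have "card (insert down (up ` {..<n})) \<le> card (unit_sphere_NN n y)"
    using fin by (rule card_mono[rotated])
  moreover have "card (insert down (up ` {..<n})) = n + 1"
    using down_not_up inj_up by (simp add: card_image)
  ultimately show ?thesis
    by simp
qed

lemma isometry_NN_image_unit_sphere:
  assumes iso: "isometry_NN n \<alpha>" and x: "x \<in> NN n"
  shows "\<alpha> ` unit_sphere_NN n x = unit_sphere_NN n (\<alpha> x)"
proof -
  have bij: "bij_betw \<alpha> (NN n) (NN n)"
    and dist: "\<And>y z. y \<in> NN n \<Longrightarrow> z \<in> NN n \<Longrightarrow> edist (\<alpha> y) (\<alpha> z) = edist y z"
    using iso by (auto simp: isometry_NN_def)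
  show ?thesis
  proof (intro equalityI subsetI)
    fix w
    assume "w \<in> \<alpha> ` unit_sphere_NN n x"
    then show "w \<in> unit_sphere_NN n (\<alpha> x)"
      using bij dist x by (auto simp: unit_sphere_NN_def bij_betw_def)
  next
    fix w
    assume w: "w \<in> unit_sphere_NN n (\<alpha> x)"
    then obtain z where "z \<in> NN n" "w = \<alpha> z"
      using bij by (auto simp: unit_sphere_NN_def bij_betw_def)
    with w dist x show "w \<in> \<alpha> ` unit_sphere_NN n x"
      by (auto simp: unit_sphere_NN_def)
  qed
qed

theorem corollary2p3:
  fixes n :: nat and \<alpha> :: "nat list \<Rightarrow> nat list"
  assumes "n \<ge> 2" and "isometry_NN n \<alpha>"
  shows "\<alpha> (replicate n 1) = replicate n 1"
proof (rule ccontr)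
  let ?one = "replicate n (1::nat)"
  assume moved: "\<alpha> ?one \<noteq> ?one"
  have sphere: "unit_sphere_NN n (\<alpha> ?one) = \<alpha> ` unit_sphere_NN n ?one"
    using isometry_NN_image_unit_sphere[OF assms(2) replicate_1_in_NN] by simp
  have "finite (unit_sphere_NN n ?one)"
    using unit_sphere_replicate_1 by (rule finite_subset) simp
  then have fin: "finite (unit_sphere_NN n (\<alpha> ?one))"
    unfolding sphere by (rule finite_imageI)
  have "\<alpha> ?one \<in> NN n"
    using assms(2) replicate_1_in_NN by (auto simp: isometry_NN_def bij_betw_def)
  then have "n < card (unit_sphere_NN n (\<alpha> ?one))"
    using moved fin by (rule card_unit_sphere_gt)
  also have "\<dots> \<le> card (unit_sphere_NN n ?one)"
    unfolding sphere by (rule card_image_le) fact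
  also have "\<dots> \<le> n"
    by (rule card_unit_sphere_replicate_1)
  finally show False
    by simp
qed

end
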